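(* Assume (A1) and (A2) below. Then for any $(s,a)\in\mathcal S\times\mathcal A$ and policy $\pi$, the posterior variance of the $Q$-function $U_t^\pi(s,a)=\mathbb{V}_{p\sim\Phi_t}\big[Q^{\pi,p}(s,a)\big]$ satisfies $$U_t^\pi(s,a)=\gamma^2u_t(s,a)+\gamma^2\sum_{a',s'}\pi(a'\mid s')\bar p_t(s'\mid s,a)U_t^\pi(s',a'),$$ where $$u_t(s,a)=\mathbb{V}_{a',s'\sim\pi,\bar p_t}\big[\bar Q^\pi_t(s',a')\big]-\mathbb{E}_{p\sim\Phi_t}\Big[\mathbb{V}_{a',s'\sim\pi,p}\big[Q^{\pi,p}(s',a')\big]\Big].$$
   Context: Let $\mathcal S$ be a finite state space, $\mathcal A$ a finite action space, $r:\mathcal S\times\mathcal A\to\mathbb R$ a known bounded (deterministic) reward function and $\gamma\in[0,1)$ a discount factor. A transition function $p$ assigns to each $(s,a)$ a probability distribution $p(\cdot\mid s,a)$ on $\mathcal S$. A policy $\pi$ gives distributions $\pi(\cdot\mid s)$ on $\mathcal A$. For a transition function $p$, $Q^{\pi,p}(s,a)=\mathbb E\big[\sum_{h\ge 0}\gamma^h r(s_h,a_h)\mid s_0=s,a_0=a\big]$ with $s_{h+1}\sim p(\cdot\mid s_h,a_h)$ and $a_{h}\sim\pi(\cdot\mid s_{h})$ for $h\ge1$. The transition function $p$ is a random variable with distribution $\Phi_t$. Define $\bar p_t(s'\mid s,a)=\mathbb E_{p\sim\Phi_t}[p(s'\mid s,a)]$ and $\bar Q^\pi_t(s,a)=\mathbb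 E_{p\sim\Phi_t}[Q^{\pi,p}(s,a)]$. For a transition function $q$ and a function $f$ on $\mathcal S\times\mathcal A$, $\mathbb V_{a',s'\sim\pi,q}[f(s',a')]$ denotes the variance of $f(s',a')$ when $s'\sim q(\cdot\mid s,a)$ and $a'\sim\pi(\cdot\mid s')$. Assumptions: (A1) (independent transitions) $p(s'\mid x,a)$ and $p(s'\mid y,a)$ are independent random variables if $x\neq y$; (A2) (acyclic MDP) the MDP is a directed acyclic graph, i.e., states are not visited more than once in any given episode. *)

theory Defs
  imports "HOL-Probability.Probability"
begin

text \<open>Transition functions: p s a s' = p(s' | s,a). Policies: pol s a = pi(a | s).\<close>

definition is_transition :: "('s::finite \<Rightarrow> 'a::finite \<Rightarrow> 's \<Rightarrow> real) \<Rightarrow> bool" where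
  "is_transition p \<longleftrightarrow> (\<forall>s a s'. 0 \<le> p s a s') \<and> (\<forall>s a. (\<Sum>s'\<in>UNIV. p s a s') = 1)"

definition is_policy :: "('s::finite \<Rightarrow> 'a::finite \<Rightarrow> real) \<Rightarrow> bool" where
  "is_policy pol \<longleftrightarrow> (\<forall>s a. 0 \<le> pol s a) \<and> (\<forall>s. (\<Sum>a\<in>UNIV. pol s a) = 1)"

text \<open>Distribution of (s_h, a_h) given s_0 = s, a_0 = a (a_0 fixed, a_h ~ pi for h \<ge> 1).\<close>
fun sa_dist :: "('s::finite \<Rightarrow> 'a::finite \<Rightarrow> real) \<Rightarrow> ('s \<Rightarrow> 'a \<Rightarrow> 's \<Rightarrow> real)
                 \<Rightarrow> 's \<Rightarrow> 'a \<Rightarrow> nat \<Rightarrow> 's \<Rightarrow> 'a \<Rightarrow> real" where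
  "sa_dist pol p s a 0 x b = (if x = s \<and> b = a then 1 else 0)"
| "sa_dist pol p s a (Suc h) x b =
     (\<Sum>y\<in>UNIV. \<Sum>c\<in>UNIV. sa_dist pol p s a h y c * p y c x) * pol x b"

definition Qfun :: "('s::finite \<Rightarrow> 'a::finite \<Rightarrow> real) \<Rightarrow> real \<Rightarrow> ('s \<Rightarrow> 'a \<Rightarrow> real)
                    \<Rightarrow> ('s \<Rightarrow> 'a \<Rightarrow> 's \<Rightarrow> real) \<Rightarrow> 's \<Rightarrow> 'a \<Rightarrow> real" where
  "Qfun r \<gamma> pol p s a =
     (\<Sum>h. \<gamma> ^ h * (\<Sum>x\<in>UNIV. \<Sum>b\<in>UNIV. sa_dist pol p s a h x b * r x b))"

definition Vstep :: "('s::finite \<Rightarrow> 'a::finite \<Rightarrow> real) \<Rightarrow> ('s \<Rightarrow> 'a \<Rightarrow> 's \<Rightarrow> real)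
                     \<Rightarrow> ('s \<Rightarrow> 'a \<Rightarrow> real) \<Rightarrow> 's \<Rightarrow> 'a \<Rightarrow> real" where
  "Vstep pol q f s a =
     (let m = (\<Sum>s'\<in>UNIV. \<Sum>a'\<in>UNIV. q s a s' * pol s' a' * f s' a')
      in (\<Sum>s'\<in>UNIV. \<Sum>a'\<in>UNIV. q s a s' * pol s' a' * (f s' a' - m)\<^sup>2))"

definition pmean :: "'w measure \<Rightarrow> ('w \<Rightarrow> real) \<Rightarrow> real" where
  "pmean M X = (\<integral>\<omega>. X \<omega> \<partial>M)"

definition pvar :: "'w measure \<Rightarrow> ('w \<Rightarrow> real) \<Rightarrow> real" where
  "pvar M X = (\<integral>\<omega>. (X \<omega> - pmean M X)\<^sup>2 \<partial>M)"

end

(*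
  By the Bellman equation Q(s,a) = r(s,a) + gamma * X with
  X = sum_{s',a'} p(s'|s,a) pi(a'|s') Q(s',a'), so U(s,a) = gamma^2 Var[X].
  Expanding Var[X] = E[X^2] - E[X]^2 and E[X^2] = E[sum p pi Q^2] - E[V_p Q],
  everything reduces to the factorisation
    E[p(s'|s,a) Q(s',a')^n] = pbar(s'|s,a) E[Q(s',a')^n]   (n = 1, 2).
  It holds because Q(s',a') only reads the rows of p reachable from s'; by
  acyclicity these exclude s, so (A1) makes them independent of p(.|s,a).
  The exceptions are (s,s') not in G, where p(s'|s,a) = 0, and an absorbing
  self-loop s' = s, where p(s'|s,a) = 1.
*)

theory Submission
  imports Defs
begin

section \<open>One-step expectations\<close>

lemma sum_nested_swap:
  "(\<Sum>y\<in>A. \<Sum>c\<in>B. \<Sum>x\<in>C. \<Sum>b\<in>D. f y c x b) = (\<Sum>x\<in>C. \<Sum>b\<in>D. \<Sum>y\<in>A. \<Sum>c\<in>B. f y c x b)"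
proof -
  have "(\<Sum>y\<in>A. \<Sum>c\<in>B. \<Sum>x\<in>C. \<Sum>b\<in>D. f y c x b) = (\<Sum>y\<in>A. \<Sum>x\<in>C. \<Sum>c\<in>B. \<Sum>b\<in>D. f y c x b)"
    by (rule sum.cong[OF refl], rule sum.swap)
  also have "\<dots> = (\<Sum>x\<in>C. \<Sum>y\<in>A. \<Sum>b\<in>D. \<Sum>c\<in>B. f y c x b)"
    by (subst sum.swap) (rule sum.cong[OF refl], rule sum.cong[OF refl], rule sum.swap)
  also have "\<dots> = (\<Sum>x\<in>C. \<Sum>b\<in>D. \<Sum>y\<in>A. \<Sum>c\<in>B. f y c x b)"
    by (rule sum.cong[OF refl], rule sum.swap)
  finally show ?thesis .
qed

definition step_mean :: "('s::finite \<Rightarrow> 'a::finite \<Rightarrow> real) \<Rightarrow> ('s \<Rightarrow> 'a \<Rightarrow> 's \<Rightarrow> real)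
                         \<Rightarrow> ('s \<Rightarrow> 'a \<Rightarrow> real) \<Rightarrow> 's \<Rightarrow> 'a \<Rightarrow> real" where
  "step_mean pol q f s a = (\<Sum>s'\<in>UNIV. \<Sum>a'\<in>UNIV. q s a s' * pol s' a' * f s' a')"

lemma step_mean_add:
  "step_mean pol q (\<lambda>x b. f x b + g x b) s a = step_mean pol q f s a + step_mean pol q g s a"
  by (simp add: step_mean_def distrib_left sum.distrib)

lemma step_mean_diff:
  "step_mean pol q (\<lambda>x b. f x b - g x b) s a = step_mean pol q f s a - step_mean pol q g s a"
  by (simp add: step_mean_def right_diff_distrib sum_subtractf)

lemma step_mean_cmult:
  "step_mean pol q (\<lambda>x b. c * f x b) s a = c * step_mean pol q f s a"
  by (simp add: step_mean_def sum_distrib_left mult.left_commute)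

lemma step_mean_const:
  assumes "is_transition q" "is_policy pol"
  shows "step_mean pol q (\<lambda>_ _. c) s a = c"
  using assms by (simp add: step_mean_def is_transition_def is_policy_def
      flip: sum_distrib_left sum_distrib_right)

lemma step_mean_abs_le:
  assumes q: "is_transition q" and pol: "is_policy pol" and f: "\<And>x b. \<bar>f x b\<bar> \<le> B"
  shows "\<bar>step_mean pol q f s a\<bar> \<le> B"
proof -
  have "\<bar>step_mean pol q f s a\<bar> \<le> (\<Sum>s'\<in>UNIV. \<bar>\<Sum>a'\<in>UNIV. q s a s' * pol s' a' * f s' a'\<bar>)"
    unfolding step_mean_def by (rule sum_abs)
  also have "\<dots> \<le> (\<Sum>s'\<in>UNIV. \<Sum>a'\<in>UNIV. \<bar>q s a s' * pol s' a' * f s' a'\<bar>)"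
    by (rule sum_mono) (rule sum_abs)
  also have "\<dots> \<le> step_mean pol q (\<lambda>_ _. B) s a"
    unfolding step_mean_def
  proof (intro sum_mono)
    fix s' a'
    have "0 \<le> q s a s'" "0 \<le> pol s' a'"
      using q pol by (simp_all add: is_transition_def is_policy_def)
    then show "\<bar>q s a s' * pol s' a' * f s' a'\<bar> \<le> q s a s' * pol s' a' * B"
      by (simp add: abs_mult mult_left_mono f)
  qed
  finally show ?thesis
    by (simp only: step_mean_const[OF q pol])
qed

lemma Vstep_eq_step_mean:
  assumes "is_transition q" "is_policy pol"
  shows "Vstep pol q f s a = step_mean pol q (\<lambda>x b. (f x b)\<^sup>2) s a - (step_mean pol q f s a)\<^sup>2"
proof -
  define m where "m = step_mean pol q f s a"
  have "Vstep pol q f s a = step_mean pol q (\<lambda>x b. (f x b - m)\<^sup>2) s a"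
    unfolding Vstep_def Let_def step_mean_def m_def ..
  also have "\<dots> = step_mean pol q (\<lambda>x b. (f x b)\<^sup>2 - 2 * m * f x b + m\<^sup>2 * 1) s a"
    by (simp add: power2_diff algebra_simps)
  also have "\<dots> = step_mean pol q (\<lambda>x b. (f x b)\<^sup>2) s a - 2 * m * step_mean pol q f s a
      + m\<^sup>2 * step_mean pol q (\<lambda>_ _. 1) s a"
    by (simp only: step_mean_add step_mean_diff step_mean_cmult)
  finally show ?thesis
    unfolding step_mean_const[OF assms] m_def by (simp add: power2_eq_square)
qed

section \<open>The Q-function of a fixed MDP\<close>

lemma sa_dist_Suc_first:
  "sa_dist pol p s a (Suc h) x b = step_mean pol p (\<lambda>s' a'. sa_dist pol p s' a' h x b) s a"
proof (induction h arbitrary: x b)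
  case 0
  have "sa_dist pol p s a (Suc 0) x b = p s a x * pol x b"
    unfolding sa_dist.simps by (subst sum.swap) (simp add: if_distrib[of "\<lambda>t. t * _"] if_conn(1) cong: if_cong)
  moreover have "step_mean pol p (\<lambda>s' a'. sa_dist pol p s' a' 0 x b) s a = p s a x * pol x b"
    unfolding step_mean_def
    by (subst sum.swap) (simp add: if_distrib[of "\<lambda>t. _ * t"] if_conn(1) cong: if_cong)
  ultimately show ?case
    by simp
next
  case (Suc h)
  have "sa_dist pol p s a (Suc (Suc h)) x b
      = (\<Sum>y\<in>UNIV. \<Sum>c\<in>UNIV. step_mean pol p (\<lambda>s' a'. sa_dist pol p s' a' h y c) s a * p y c x)
        * pol x b"
    by (subst sa_dist.simps(2)) (simp only: Suc.IH)
  also have "\<dots> = (\<Sum>y\<in>UNIV. \<Sum>c\<in>UNIV. \<Sum>s'\<in>UNIV. \<Sum>a'\<in>UNIV.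
           p s a s' * pol s' a' * (sa_dist pol p s' a' h y c * p y c x * pol x b))"
    by (simp add: step_mean_def sum_distrib_left sum_distrib_right mult.assoc)
  also have "\<dots> = (\<Sum>s'\<in>UNIV. \<Sum>a'\<in>UNIV. \<Sum>y\<in>UNIV. \<Sum>c\<in>UNIV.
           p s a s' * pol s' a' * (sa_dist pol p s' a' h y c * p y c x * pol x b))"
    by (rule sum_nested_swap)
  also have "\<dots> = step_mean pol p (\<lambda>s' a'. sa_dist pol p s' a' (Suc h) x b) s a"
    by (simp add: step_mean_def sum_distrib_left sum_distrib_right mult.assoc)
  finally show ?case .
qed

definition exp_reward :: "('s::finite \<Rightarrow> 'a::finite \<Rightarrow> real) \<Rightarrow> ('s \<Rightarrow> 'a \<Rightarrow> 's \<Rightarrow> real)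
                          \<Rightarrow> ('s \<Rightarrow> 'a \<Rightarrow> real) \<Rightarrow> nat \<Rightarrow> 's \<Rightarrow> 'a \<Rightarrow> real" where
  "exp_reward pol p r h s a = (\<Sum>x\<in>UNIV. \<Sum>b\<in>UNIV. sa_dist pol p s a h x b * r x b)"

lemma Qfun_eq_suminf_exp_reward: "Qfun r \<gamma> pol p s a = (\<Sum>h. \<gamma> ^ h * exp_reward pol p r h s a)"
  unfolding Qfun_def exp_reward_def ..

lemma exp_reward_0: "exp_reward pol p r 0 s a = r s a"
  unfolding exp_reward_def by (subst sum.swap) (simp add: if_distrib[of "\<lambda>t. t * _"] if_conn(1) cong: if_cong)

lemma exp_reward_Suc: "exp_reward pol p r (Suc h) s a = step_mean pol p (exp_reward pol p r h) s a"
proof -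
  have "exp_reward pol p r (Suc h) s a
      = (\<Sum>x\<in>UNIV. \<Sum>b\<in>UNIV. \<Sum>s'\<in>UNIV. \<Sum>a'\<in>UNIV.
           p s a s' * pol s' a' * (sa_dist pol p s' a' h x b * r x b))"
    unfolding exp_reward_def sa_dist_Suc_first step_mean_def
    by (simp add: sum_distrib_right mult.assoc)
  also have "\<dots> = (\<Sum>s'\<in>UNIV. \<Sum>a'\<in>UNIV. \<Sum>x\<in>UNIV. \<Sum>b\<in>UNIV.
           p s a s' * pol s' a' * (sa_dist pol p s' a' h x b * r x b))"
    by (rule sum_nested_swap)
  also have "\<dots> = step_mean pol p (exp_reward pol p r h) s a"
    unfolding exp_reward_def step_mean_def by (simp add: sum_distrib_left)
  finally show ?thesis .
qed

lemma exp_reward_abs_le: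
  assumes "is_transition p" "is_policy pol" "\<And>x b. \<bar>r x b\<bar> \<le> R"
  shows "\<bar>exp_reward pol p r h s a\<bar> \<le> R"
proof (induction h arbitrary: s a)
  case 0
  show ?case using assms(3) by (simp add: exp_reward_0)
next
  case (Suc h)
  show ?case
    unfolding exp_reward_Suc by (rule step_mean_abs_le[OF assms(1,2) Suc.IH])
qed

lemma summable_exp_reward:
  assumes "is_transition p" "is_policy pol" "\<And>x b. \<bar>r x b\<bar> \<le> R" "0 \<le> \<gamma>" "\<gamma> < 1"
  shows "summable (\<lambda>h. \<gamma> ^ h * exp_reward pol p r h s a)"
proof (rule summable_comparison_test)
  show "summable (\<lambda>h. \<gamma> ^ h * R)"
    using assms(4,5) by (intro summable_mult2 summable_geometric) simp
  show "\<exists>N. \<forall>h\<ge>N. norm (\<gamma> ^ h * exp_reward pol p r h s a) \<le> \<gamma> ^ h * R"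
    using exp_reward_abs_le[OF assms(1-3)] assms(4) by (auto simp: abs_mult intro!: mult_left_mono)
qed

lemma Qfun_abs_le:
  assumes "is_transition p" "is_policy pol" "\<And>x b. \<bar>r x b\<bar> \<le> R" "0 \<le> \<gamma>" "\<gamma> < 1"
  shows "\<bar>Qfun r \<gamma> pol p s a\<bar> \<le> R / (1 - \<gamma>)"
proof -
  have geom: "(\<lambda>h. \<gamma> ^ h * R) sums (R / (1 - \<gamma>))"
    using sums_mult2[OF geometric_sums, of \<gamma> R] assms(4,5) by simp
  have "norm (\<Sum>h. \<gamma> ^ h * exp_reward pol p r h s a) \<le> (\<Sum>h. \<gamma> ^ h * R)"
    using exp_reward_abs_le[OF assms(1-3)] assms(4) sums_summable[OF geom]
    by (intro norm_suminf_le) (auto simp: abs_mult intro!: mult_left_mono)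
  then show ?thesis
    unfolding Qfun_eq_suminf_exp_reward sums_unique[OF geom, symmetric] by simp
qed

lemma ex_abs_bound:
  fixes r :: "'s::finite \<Rightarrow> 'a::finite \<Rightarrow> real"
  obtains R where "\<And>x b. \<bar>r x b\<bar> \<le> R"
proof
  show "\<bar>r x b\<bar> \<le> Max (range (\<lambda>(x, b). \<bar>r x b\<bar>))" for x b
    by (rule Max_ge) (auto intro: image_eqI[where x = "(x, b)"])
qed

lemma sums_step_mean:
  assumes "\<And>x b. (\<lambda>h. g h x b) sums f x b"
  shows "(\<lambda>h. step_mean pol q (g h) s a) sums step_mean pol q f s a"
  unfolding step_mean_def by (intro sums_sum sums_mult assms)

lemma Qfun_Bellman:
  assumes "is_transition p" "is_policy pol" "0 \<le> \<gamma>" "\<gamma> < 1"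
  shows "Qfun r \<gamma> pol p s a = r s a + \<gamma> * step_mean pol p (Qfun r \<gamma> pol p) s a"
proof -
  obtain R where R: "\<And>x b. \<bar>r x b\<bar> \<le> R"
    using ex_abs_bound by blast
  define g where "g h x b = \<gamma> ^ h * exp_reward pol p r h x b" for h x b
  have sums: "(\<lambda>h. g h x b) sums Qfun r \<gamma> pol p x b" for x b
    unfolding g_def Qfun_eq_suminf_exp_reward
    by (rule summable_sums[OF summable_exp_reward[OF assms(1,2) R assms(3,4)]])
  have "g (Suc h) s a = \<gamma> * step_mean pol p (g h) s a" for h
    unfolding g_def exp_reward_Suc by (simp add: step_mean_cmult[symmetric] mult_ac)
  then have "(\<lambda>h. g (Suc h) s a) sums (\<gamma> * step_mean pol p (Qfun r \<gamma> pol p) s a)"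
    using sums_mult[OF sums_step_mean[OF sums]] by simp
  then have "(\<lambda>h. g h s a) sums (\<gamma> * step_mean pol p (Qfun r \<gamma> pol p) s a + g 0 s a)"
    by (rule sums_Suc)
  then show ?thesis
    using sums_unique2[OF sums] by (simp add: g_def exp_reward_0)
qed

lemma borel_measurable_sa_dist:
  assumes "\<And>x b y. (\<lambda>\<omega>. p \<omega> x b y) \<in> borel_measurable N"
  shows "(\<lambda>\<omega>. sa_dist pol (p \<omega>) s a h x b) \<in> borel_measurable N"
  by (induction h arbitrary: x b) (auto intro!: borel_measurable_sum borel_measurable_times assms)

lemma borel_measurable_Qfun:
  assumes "\<And>x b y. (\<lambda>\<omega>. p \<omega> x b y) \<in> borel_measurable N"
  shows "(\<lambda>\<omega>. Qfun r \<gamma> pol (p \<omega>) s a) \<in> borel_measurable N"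
  unfolding Qfun_def
  by (intro borel_measurable_suminf borel_measurable_times borel_measurable_sum
      borel_measurable_const borel_measurable_sa_dist assms)

lemma borel_measurable_step_mean:
  assumes "\<And>x b y. (\<lambda>\<omega>. q \<omega> x b y) \<in> borel_measurable N"
    and "\<And>x b. (\<lambda>\<omega>. f \<omega> x b) \<in> borel_measurable N"
  shows "(\<lambda>\<omega>. step_mean pol (q \<omega>) (f \<omega>) s a) \<in> borel_measurable N"
  unfolding step_mean_def
  by (intro borel_measurable_sum borel_measurable_times borel_measurable_const assms)

lemma Qfun_cong_closed:
  assumes agree: "\<And>y c x. y \<in> K \<Longrightarrow> p y c x = p' y c x"
    and closed: "\<And>y c x. y \<in> K \<Longrightarrow> p y c x \<noteq> 0 \<Longrightarrow> x \<in> K"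
    and "s \<in> K"
  shows "Qfun r \<gamma> pol p s a = Qfun r \<gamma> pol p' s a"
proof -
  have "sa_dist pol p s a h x b = sa_dist pol p' s a h x b \<and> (x \<notin> K \<longrightarrow> sa_dist pol p s a h x b = 0)"
    for h x b
  proof (induction h arbitrary: x b)
    case 0
    show ?case using \<open>s \<in> K\<close> by auto
  next
    case (Suc h)
    have "sa_dist pol p s a h y c * p y c x = sa_dist pol p' s a h y c * p' y c x" for y c
      using Suc.IH[of y c] agree[of y c x] by (cases "y \<in> K") auto
    moreover have "(\<Sum>y\<in>UNIV. \<Sum>c\<in>UNIV. sa_dist pol p s a h y c * p y c x) = 0" if "x \<notin> K"
    proof (intro sum.neutral ballI)
      show "sa_dist pol p s a h y c * p y c x = 0" for y c
        using Suc.IH[of y c] closed[of y c x] that by (cases "y \<in> K") auto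
    qed
    ultimately show ?case by simp
  qed
  then show ?thesis unfolding Qfun_def by simp
qed

section \<open>Independence of Q from the current row\<close>

definition restrict_rows :: "'s set \<Rightarrow> ('s \<Rightarrow> 'a \<Rightarrow> 's \<Rightarrow> real) \<Rightarrow> 's \<Rightarrow> 'a \<Rightarrow> 's \<Rightarrow> real" where
  "restrict_rows K p = (\<lambda>x. if x \<in> K then p x else (\<lambda>_ _. 0))"

lemma Qfun_restrict_rows_reachable:
  assumes "\<And>x b y. p x b y \<noteq> 0 \<Longrightarrow> (x, y) \<in> G"
  shows "Qfun r \<gamma> pol p s a = Qfun r \<gamma> pol (restrict_rows {x. (s, x) \<in> G\<^sup>*} p) s a"
  by (rule Qfun_cong_closed[where K = "{x. (s, x) \<in> G\<^sup>*}"])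
    (auto simp: restrict_rows_def intro: rtrancl_into_rtrancl assms)

lemma measurable_row_entry:
  assumes "x \<in> K"
  shows "(\<lambda>f. f x b y) \<in> borel_measurable (PiM K (\<lambda>_. borel :: ('a \<Rightarrow> 's \<Rightarrow> real) measure))"
proof -
  have "(\<lambda>g :: 'a \<Rightarrow> 's \<Rightarrow> real. g b y) \<in> borel_measurable borel"
    by (rule measurable_compose[OF measurable_product_coordinates measurable_product_coordinates])
  from measurable_compose[OF measurable_component_singleton[OF assms] this] show ?thesis
    by simp
qed

lemma borel_measurable_Qfun_restrict_rows:
  "(\<lambda>f. Qfun r \<gamma> pol (restrict_rows K f) s a)
     \<in> borel_measurable (PiM K (\<lambda>_. borel :: ('a::finite \<Rightarrow> 's::finite \<Rightarrow> real) measure))"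
proof (rule borel_measurable_Qfun)
  show "(\<lambda>f. restrict_rows K f x b y) \<in> borel_measurable (PiM K (\<lambda>_. borel))" for x and b :: 'a and y
    by (cases "x \<in> K") (simp_all add: restrict_rows_def measurable_row_entry)
qed

lemma (in prob_space) integral_transition_times_Qfun:
  fixes P :: "'a \<Rightarrow> ('s::finite \<Rightarrow> 'b::finite \<Rightarrow> 's \<Rightarrow> real)"
  assumes rows_indep: "indep_vars (\<lambda>_. borel) (\<lambda>x \<omega>. P \<omega> x) UNIV"
    and support: "\<And>\<omega> x b y. \<omega> \<in> space M \<Longrightarrow> P \<omega> x b y \<noteq> 0 \<Longrightarrow> (x, y) \<in> G"
    and unreachable: "(s', s) \<notin> G\<^sup>*"
    and F: "F \<in> borel_measurable borel"
    and int_F: "integrable M (\<lambda>\<omega>. F (Qfun r \<gamma> pol (P \<omega>) s' a'))"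
    and int_P: "integrable M (\<lambda>\<omega>. P \<omega> s a s')"
  shows "(\<integral>\<omega>. P \<omega> s a s' * F (Qfun r \<gamma> pol (P \<omega>) s' a') \<partial>M)
       = (\<integral>\<omega>. P \<omega> s a s' \<partial>M) * (\<integral>\<omega>. F (Qfun r \<gamma> pol (P \<omega>) s' a') \<partial>M)"
proof -
  define K where "K = {x. (s', x) \<in> G\<^sup>*}"
  define Z where "Z f = F (Qfun r \<gamma> pol (restrict_rows K f) s' a')" for f
  let ?row_K = "\<lambda>\<omega>. restrict (\<lambda>x. P \<omega> x) K" and ?row_s = "\<lambda>\<omega>. restrict (\<lambda>x. P \<omega> x) {s}"
  have "indep_var (PiM K (\<lambda>_. borel)) ?row_K (PiM {s} (\<lambda>_. borel)) ?row_s"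
    using unreachable by (intro indep_var_restrict[OF rows_indep]) (auto simp: K_def)
  moreover have "Z \<in> borel_measurable (PiM K (\<lambda>_. borel))"
    unfolding Z_def by (rule measurable_compose[OF borel_measurable_Qfun_restrict_rows F])
  moreover have "(\<lambda>f. f s a s') \<in> borel_measurable (PiM {s} (\<lambda>_. borel :: ('b \<Rightarrow> 's \<Rightarrow> real) measure))"
    by (simp add: measurable_row_entry)
  ultimately have "indep_var borel (Z \<circ> ?row_K) borel ((\<lambda>f. f s a s') \<circ> ?row_s)"
    by (rule indep_var_compose)
  then have indep: "indep_var borel (Z \<circ> ?row_K) borel (\<lambda>\<omega>. P \<omega> s a s')"
    by (simp add: comp_def)
  have Z_eq: "(Z \<circ> ?row_K) \<omega> = F (Qfun r \<gamma> pol (P \<omega>) s' a')" if "\<omega> \<in> space M" for \<omega>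
  proof -
    have "restrict_rows K (?row_K \<omega>) = restrict_rows K (P \<omega>)"
      by (simp add: restrict_rows_def fun_eq_iff)
    then show ?thesis
      using Qfun_restrict_rows_reachable[of "P \<omega>" G r \<gamma> pol s' a'] support[OF that]
      by (simp add: Z_def K_def)
  qed
  have "(\<integral>\<omega>. P \<omega> s a s' * F (Qfun r \<gamma> pol (P \<omega>) s' a') \<partial>M)
      = (\<integral>\<omega>. (Z \<circ> ?row_K) \<omega> * P \<omega> s a s' \<partial>M)"
    using Z_eq by (intro Bochner_Integration.integral_cong) auto
  also have "\<dots> = (\<integral>\<omega>. (Z \<circ> ?row_K) \<omega> \<partial>M) * (\<integral>\<omega>. P \<omega> s a s' \<partial>M)"
    using int_F Z_eq
    by (intro indep_var_lebesgue_integral[OF indep _ int_P])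
      (simp cong: Bochner_Integration.integrable_cong)
  also have "(\<integral>\<omega>. (Z \<circ> ?row_K) \<omega> \<partial>M) = (\<integral>\<omega>. F (Qfun r \<gamma> pol (P \<omega>) s' a') \<partial>M)"
    using Z_eq by (intro Bochner_Integration.integral_cong) auto
  finally show ?thesis by simp
qed

section \<open>Posterior moments\<close>

lemma (in finite_measure) integrable_power_bounded:
  fixes f :: "'a \<Rightarrow> real"
  assumes "f \<in> borel_measurable M" "\<And>\<omega>. \<omega> \<in> space M \<Longrightarrow> \<bar>f \<omega>\<bar> \<le> B"
  shows "integrable M (\<lambda>\<omega>. f \<omega> ^ n)"
proof (rule integrable_const_bound[where B = "B ^ n"])
  show "AE \<omega> in M. norm (f \<omega> ^ n) \<le> B ^ n"
    using assms(2) by (auto simp: power_abs intro!: power_mono)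
qed (use assms(1) in simp)

lemma (in prob_space) pvar_eq:
  assumes "integrable M X" "integrable M (\<lambda>\<omega>. (X \<omega>)\<^sup>2)"
  shows "pvar M X = pmean M (\<lambda>\<omega>. (X \<omega>)\<^sup>2) - (pmean M X)\<^sup>2"
  unfolding pvar_def pmean_def by (rule variance_eq[OF assms])

lemma (in prob_space) pvar_affine:
  assumes "integrable M X" "\<And>\<omega>. \<omega> \<in> space M \<Longrightarrow> Y \<omega> = c + d * X \<omega>"
  shows "pvar M Y = d\<^sup>2 * pvar M X"
proof -
  have "pmean M Y = c + d * pmean M X"
    unfolding pmean_def using assms
    by (simp add: Bochner_Integration.integral_cong[OF refl assms(2)] prob_space)
  then have "pvar M Y = (\<integral>\<omega>. d\<^sup>2 * (X \<omega> - pmean M X)\<^sup>2 \<partial>M)"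
    unfolding pvar_def using assms(2)
    by (intro Bochner_Integration.integral_cong) (auto simp: power2_eq_square algebra_simps)
  then show ?thesis
    unfolding pvar_def by simp
qed

lemma acyclic_Diff_Id_no_return:
  assumes "acyclic (G - Id)" "(x, y) \<in> G" "x \<noteq> y"
  shows "(y, x) \<notin> G\<^sup>*"
proof
  assume "(y, x) \<in> G\<^sup>*"
  then have "(y, x) \<in> (G - Id)\<^sup>*"
    by (simp add: rtrancl_r_diff_Id)
  with assms(2,3) have "(x, x) \<in> (G - Id)\<^sup>+"
    by (auto intro: rtrancl_into_trancl2)
  with assms(1) show False
    by (simp add: acyclic_def)
qed

locale posterior_mdp = prob_space M
  for M :: "'w measure"
    and P :: "'w \<Rightarrow> ('s::finite \<Rightarrow> 'a::finite \<Rightarrow> 's \<Rightarrow> real)"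
    and r :: "'s \<Rightarrow> 'a \<Rightarrow> real"
    and \<gamma> :: real
    and pol :: "'s \<Rightarrow> 'a \<Rightarrow> real"
    and G :: "('s \<times> 's) set" +
  assumes gamma: "0 \<le> \<gamma>" "\<gamma> < 1"
    and policy: "is_policy pol"
    and trans: "\<And>\<omega>. \<omega> \<in> space M \<Longrightarrow> is_transition (P \<omega>)"
    and meas: "\<And>x b y. (\<lambda>\<omega>. P \<omega> x b y) \<in> borel_measurable M"
    and rows_indep: "indep_vars (\<lambda>_. borel) (\<lambda>x \<omega>. P \<omega> x) UNIV"
    and support_in_G: "\<And>\<omega> x b y. \<omega> \<in> space M \<Longrightarrow> 0 < P \<omega> x b y \<Longrightarrow> (x, y) \<in> G"
    and acyclic: "acyclic (G - Id)"
    and self_loop: "\<And>\<omega> x b. \<omega> \<in> space M \<Longrightarrow> (x, x) \<in> G \<Longrightarrow> P \<omega> x b x = 1"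
begin

abbreviation Q :: "'w \<Rightarrow> 's \<Rightarrow> 'a \<Rightarrow> real" where
  "Q \<omega> \<equiv> Qfun r \<gamma> pol (P \<omega>)"

abbreviation pbar :: "'s \<Rightarrow> 'a \<Rightarrow> 's \<Rightarrow> real" where
  "pbar x b y \<equiv> pmean M (\<lambda>\<omega>. P \<omega> x b y)"

lemma transition_nonneg: "\<omega> \<in> space M \<Longrightarrow> 0 \<le> P \<omega> x b y"
  using trans by (simp add: is_transition_def)

lemma transition_abs_le_1:
  assumes "\<omega> \<in> space M"
  shows "\<bar>P \<omega> x b y\<bar> \<le> 1"
proof -
  have "P \<omega> x b y \<le> (\<Sum>y'\<in>UNIV. P \<omega> x b y')"
    by (rule member_le_sum) (use transition_nonneg[OF assms] in auto)
  then show ?thesis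
    using trans[OF assms] transition_nonneg[OF assms] by (simp add: is_transition_def)
qed

lemma integrable_transition: "integrable M (\<lambda>\<omega>. P \<omega> x b y)"
  using integrable_power_bounded[where f = "\<lambda>\<omega>. P \<omega> x b y" and n = 1, OF meas transition_abs_le_1]
  by simp

lemma is_transition_pbar: "is_transition pbar"
proof -
  have "(\<Sum>y\<in>UNIV. pbar x b y) = 1" for x b
  proof -
    have "(\<Sum>y\<in>UNIV. pbar x b y) = pmean M (\<lambda>\<omega>. \<Sum>y\<in>UNIV. P \<omega> x b y)"
      unfolding pmean_def by (simp add: integrable_transition)
    also have "\<dots> = pmean M (\<lambda>_. 1)"
      unfolding pmean_def using trans
      by (intro Bochner_Integration.integral_cong) (simp_all add: is_transition_def)
    finally show ?thesis
      by (simp add: pmean_def prob_space)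
  qed
  then show ?thesis
    unfolding is_transition_def pmean_def using transition_nonneg by (auto intro: integral_nonneg)
qed

lemma support_nonzero: "\<omega> \<in> space M \<Longrightarrow> P \<omega> x b y \<noteq> 0 \<Longrightarrow> (x, y) \<in> G"
  using support_in_G[of \<omega> x b y] transition_nonneg[of \<omega> x b y] by (simp add: less_le)

lemma Q_bounded:
  obtains B where "\<And>\<omega> x b. \<omega> \<in> space M \<Longrightarrow> \<bar>Q \<omega> x b\<bar> \<le> B"
proof -
  obtain R where "\<And>x b. \<bar>r x b\<bar> \<le> R"
    using ex_abs_bound by blast
  then show ?thesis
    using that Qfun_abs_le[OF trans policy _ gamma] by blast
qed

lemma integrable_Q_power: "integrable M (\<lambda>\<omega>. Q \<omega> x b ^ n)"
proof -
  obtain B where "\<And>\<omega> x b. \<omega> \<in> space M \<Longrightarrow> \<bar>Q \<omega> x b\<bar> \<le> B"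
    using Q_bounded by blast
  then show ?thesis
    by (rule integrable_power_bounded[OF borel_measurable_Qfun[OF meas]])
qed

lemma integrable_step_mean_Q_power:
  "integrable M (\<lambda>\<omega>. step_mean pol (P \<omega>) (\<lambda>x b. Q \<omega> x b ^ n) s a ^ k)"
proof -
  obtain B where B: "\<And>\<omega> x b. \<omega> \<in> space M \<Longrightarrow> \<bar>Q \<omega> x b\<bar> \<le> B"
    using Q_bounded by blast
  have "\<bar>Q \<omega> x b ^ n\<bar> \<le> B ^ n" if "\<omega> \<in> space M" for \<omega> x b
    unfolding power_abs by (rule power_mono[OF B[OF that] abs_ge_zero])
  then show ?thesis
    by (intro integrable_power_bounded borel_measurable_step_mean meas borel_measurable_power
        borel_measurable_Qfun step_mean_abs_le trans policy)
qed

lemma mean_transition_times_Q_power: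
  "pmean M (\<lambda>\<omega>. P \<omega> s a s' * Q \<omega> s' a' ^ n) = pbar s a s' * pmean M (\<lambda>\<omega>. Q \<omega> s' a' ^ n)"
proof (cases "(s, s') \<in> G \<and> s \<noteq> s'")
  case True
  then have "(s', s) \<notin> G\<^sup>*"
    using acyclic_Diff_Id_no_return[OF acyclic] by blast
  then show ?thesis
    unfolding pmean_def
    by (intro integral_transition_times_Qfun[where F = "\<lambda>x. x ^ n"] rows_indep)
      (auto simp: support_nonzero integrable_Q_power integrable_transition)
next
  case False
  then consider "\<And>\<omega>. \<omega> \<in> space M \<Longrightarrow> P \<omega> s a s' = 0" | "\<And>\<omega>. \<omega> \<in> space M \<Longrightarrow> P \<omega> s a s' = 1"
    using support_nonzero self_loop by blast
  then show ?thesis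
  proof cases
    case 1
    have "pmean M (\<lambda>\<omega>. P \<omega> s a s' * Q \<omega> s' a' ^ n) = pmean M (\<lambda>_. 0)"
      "pbar s a s' = pmean M (\<lambda>_. 0)"
      unfolding pmean_def by (rule Bochner_Integration.integral_cong; simp add: 1)+
    then show ?thesis
      by (simp add: pmean_def)
  next
    case 2
    have "pmean M (\<lambda>\<omega>. P \<omega> s a s' * Q \<omega> s' a' ^ n) = pmean M (\<lambda>\<omega>. Q \<omega> s' a' ^ n)"
      "pbar s a s' = pmean M (\<lambda>_. 1)"
      unfolding pmean_def by (rule Bochner_Integration.integral_cong; simp add: 2)+
    then show ?thesis
      by (simp add: pmean_def prob_space)
  qed
qed

lemma integrable_transition_times_Q_power: "integrable M (\<lambda>\<omega>. P \<omega> s a s' * Q \<omega> s' a' ^ n)"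
proof -
  obtain B where B: "\<And>\<omega> x b. \<omega> \<in> space M \<Longrightarrow> \<bar>Q \<omega> x b\<bar> \<le> B"
    using Q_bounded by blast
  show ?thesis
  proof (rule integrable_const_bound[where B = "B ^ n"])
    show "AE \<omega> in M. norm (P \<omega> s a s' * Q \<omega> s' a' ^ n) \<le> B ^ n"
    proof (rule AE_I2)
      fix \<omega> assume \<omega>: "\<omega> \<in> space M"
      have "\<bar>P \<omega> s a s'\<bar> * \<bar>Q \<omega> s' a'\<bar> ^ n \<le> 1 * B ^ n"
        using transition_abs_le_1[OF \<omega>] power_mono[OF B[OF \<omega>] abs_ge_zero]
        by (intro mult_mono) auto
      then show "norm (P \<omega> s a s' * Q \<omega> s' a' ^ n) \<le> B ^ n"
        by (simp add: abs_mult power_abs)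
    qed
  qed (intro borel_measurable_times borel_measurable_power meas borel_measurable_Qfun)
qed

lemma mean_step_mean_Q_power:
  "pmean M (\<lambda>\<omega>. step_mean pol (P \<omega>) (\<lambda>x b. Q \<omega> x b ^ n) s a)
     = step_mean pol pbar (\<lambda>x b. pmean M (\<lambda>\<omega>. Q \<omega> x b ^ n)) s a"
proof -
  have "pmean M (\<lambda>\<omega>. P \<omega> s a s' * pol s' a' * Q \<omega> s' a' ^ n)
      = pbar s a s' * pol s' a' * pmean M (\<lambda>\<omega>. Q \<omega> s' a' ^ n)" for s' a'
  proof -
    have "(\<lambda>\<omega>. P \<omega> s a s' * pol s' a' * Q \<omega> s' a' ^ n)
        = (\<lambda>\<omega>. pol s' a' * (P \<omega> s a s' * Q \<omega> s' a' ^ n))"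
      by (simp add: fun_eq_iff mult_ac)
    then have "pmean M (\<lambda>\<omega>. P \<omega> s a s' * pol s' a' * Q \<omega> s' a' ^ n)
        = pol s' a' * pmean M (\<lambda>\<omega>. P \<omega> s a s' * Q \<omega> s' a' ^ n)"
      by (simp add: pmean_def)
    then show ?thesis
      by (simp add: mean_transition_times_Q_power)
  qed
  moreover have "integrable M (\<lambda>\<omega>. P \<omega> s a s' * pol s' a' * Q \<omega> s' a' ^ n)" for s' a'
    using integrable_mult_right[OF integrable_transition_times_Q_power, of "pol s' a'" s a s' a' n]
    by (simp add: mult_ac)
  ultimately show ?thesis
    unfolding step_mean_def pmean_def by (simp add: Bochner_Integration.integral_sum)
qed

lemma pvar_Q_Bellman: "pvar M (\<lambda>\<omega>. Q \<omega> s a) = \<gamma>\<^sup>2 * pvar M (\<lambda>\<omega>. step_mean pol (P \<omega>) (Q \<omega>) s a)"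
  using integrable_step_mean_Q_power[of 1 s a 1] Qfun_Bellman[OF trans policy gamma]
  by (intro pvar_affine[where c = "r s a"]) simp_all

lemma pvar_step_mean_Q:
  "pvar M (\<lambda>\<omega>. step_mean pol (P \<omega>) (Q \<omega>) s a)
     = Vstep pol pbar (\<lambda>x b. pmean M (\<lambda>\<omega>. Q \<omega> x b)) s a
       - pmean M (\<lambda>\<omega>. Vstep pol (P \<omega>) (Q \<omega>) s a)
       + step_mean pol pbar (\<lambda>x b. pvar M (\<lambda>\<omega>. Q \<omega> x b)) s a"
proof -
  let ?X = "\<lambda>\<omega>. step_mean pol (P \<omega>) (Q \<omega>) s a"
  let ?X2 = "\<lambda>\<omega>. step_mean pol (P \<omega>) (\<lambda>x b. (Q \<omega> x b)\<^sup>2) s a"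
  let ?Qbar = "\<lambda>x b. pmean M (\<lambda>\<omega>. Q \<omega> x b)" and ?Q2bar = "\<lambda>x b. pmean M (\<lambda>\<omega>. (Q \<omega> x b)\<^sup>2)"
  have int_X: "integrable M ?X" "integrable M (\<lambda>\<omega>. (?X \<omega>)\<^sup>2)" "integrable M ?X2"
    using integrable_step_mean_Q_power[of 1 s a 1] integrable_step_mean_Q_power[of 1 s a 2]
      integrable_step_mean_Q_power[of 2 s a 1]
    by simp_all
  have "pvar M ?X = pmean M (\<lambda>\<omega>. (?X \<omega>)\<^sup>2) - (pmean M ?X)\<^sup>2"
    using int_X by (intro pvar_eq)
  moreover have "pmean M ?X = step_mean pol pbar ?Qbar s a"
    using mean_step_mean_Q_power[of 1 s a] by simp
  moreover have "pmean M (\<lambda>\<omega>. Vstep pol (P \<omega>) (Q \<omega>) s a) = pmean M ?X2 - pmean M (\<lambda>\<omega>. (?X \<omega>)\<^sup>2)"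
    unfolding pmean_def using int_X
    by (simp add: Bochner_Integration.integral_cong[OF refl Vstep_eq_step_mean[OF trans policy]])
  moreover have "pmean M ?X2 = step_mean pol pbar ?Q2bar s a"
    using mean_step_mean_Q_power[of 2 s a] by simp
  moreover have "Vstep pol pbar ?Qbar s a
      = step_mean pol pbar (\<lambda>x b. (?Qbar x b)\<^sup>2) s a - (step_mean pol pbar ?Qbar s a)\<^sup>2"
    by (rule Vstep_eq_step_mean[OF is_transition_pbar policy])
  moreover have "step_mean pol pbar (\<lambda>x b. pvar M (\<lambda>\<omega>. Q \<omega> x b)) s a
      = step_mean pol pbar ?Q2bar s a - step_mean pol pbar (\<lambda>x b. (?Qbar x b)\<^sup>2) s a"
    using pvar_eq[OF integrable_Q_power[of _ _ 1, simplified] integrable_Q_power[of _ _ 2]]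
    by (simp add: step_mean_diff[symmetric])
  ultimately show ?thesis
    by simp
qed

end

theorem theorem4:
  fixes M :: "'w measure"
    and P :: "'w \<Rightarrow> ('s::finite \<Rightarrow> 'a::finite \<Rightarrow> 's \<Rightarrow> real)"
    and r :: "'s \<Rightarrow> 'a \<Rightarrow> real"
    and \<gamma> :: real
    and pol :: "'s \<Rightarrow> 'a \<Rightarrow> real"
    and G :: "('s \<times> 's) set"
    and s :: 's and a :: 'a
  assumes posterior: "prob_space M"
    and gamma: "0 \<le> \<gamma>" "\<gamma> < 1"
    and policy: "is_policy pol"
    and trans: "\<And>\<omega>. \<omega> \<in> space M \<Longrightarrow> is_transition (P \<omega>)"
    and meas: "\<And>x b y. (\<lambda>\<omega>. P \<omega> x b y) \<in> borel_measurable M"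
    and A1: "prob_space.indep_vars M (\<lambda>_. borel) (\<lambda>x \<omega>. P \<omega> x) UNIV"
    and A2_graph: "\<And>\<omega> x b y. \<omega> \<in> space M \<Longrightarrow> 0 < P \<omega> x b y \<Longrightarrow> (x, y) \<in> G"
    and A2_acyclic: "acyclic (G - Id)"
    and A2_terminal: "\<And>\<omega> x b. \<omega> \<in> space M \<Longrightarrow> (x, x) \<in> G \<Longrightarrow> P \<omega> x b x = 1"
  shows
    "(let pbar = (\<lambda>x b y. pmean M (\<lambda>\<omega>. P \<omega> x b y));
          Qbar = (\<lambda>x b. pmean M (\<lambda>\<omega>. Qfun r \<gamma> pol (P \<omega>) x b));
          U = (\<lambda>x b. pvar M (\<lambda>\<omega>. Qfun r \<gamma> pol (P \<omega>) x b));
          u = (\<lambda>x b. Vstep pol pbar Qbar x b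
                      - pmean M (\<lambda>\<omega>. Vstep pol (P \<omega>) (Qfun r \<gamma> pol (P \<omega>)) x b))
      in U s a = \<gamma>\<^sup>2 * u s a
                 + \<gamma>\<^sup>2 * (\<Sum>a'\<in>UNIV. \<Sum>s'\<in>UNIV. pol s' a' * pbar s a s' * U s' a'))"
proof -
  interpret posterior_mdp M P r \<gamma> pol G
    using posterior gamma policy trans meas A1 A2_graph A2_acyclic A2_terminal
    by (simp add: posterior_mdp_def posterior_mdp_axioms_def)
  have "(\<Sum>a'\<in>UNIV. \<Sum>s'\<in>UNIV. pol s' a' * pbar s a s' * pvar M (\<lambda>\<omega>. Q \<omega> s' a'))
      = step_mean pol pbar (\<lambda>x b. pvar M (\<lambda>\<omega>. Q \<omega> x b)) s a"
    unfolding step_mean_def by (subst sum.swap) (simp add: mult_ac)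
  then show ?thesis
    unfolding Let_def using pvar_Q_Bellman[of s a] pvar_step_mean_Q[of s a]
    by (simp add: algebra_simps)
qed

end
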